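(* Let $\alpha,\beta,\gamma$ be partitions with $\alpha_1\le 2$ such that $\beta'_i\le\gamma'_i+1$ for all $i\ge 1$ (i.e. $\beta\setminus\gamma$ is a vertical strip). Then in the poset $(\mathcal D_{\alpha,\gamma}^\beta,\le_{\rm arc})$ all saturated chains have the same length.
   Context: For a partition $\lambda$, $\lambda'$ denotes the conjugate partition. Let $\alpha_1\le 2$, so $\alpha'=(\alpha'_1,\alpha'_2)$. Place the positive integers on a horizontal line in decreasing order from left to right. An arc is a pair $(m,n)$ of positive integers with $m>n$ (source $m$, target $n$), drawn as an upper semicircle joining $m$ and $n$; a pole at $n$ is a vertical half-line starting at $n$, regarded as an arc $(\infty,n)$ with source $\infty$ (larger than every integer). An arc diagram of type $(\alpha,\beta,\gamma)$ is a finite multiset of $\alpha'_2$ arcs and $\alpha'_1-\alpha'_2$ poles such that for each $i\ge1$ the number of arcs and poles having $i$ as source or target equals $\beta'_i-\gamma'_i$. $\mathcal D_{\alpha,\gamma}^\beta$ is the set of these. Two members $(m,n),(k,r)$ (arcs or poles) cross iff $r<n<k<m$ or $n<r<m<k$; $x(\Delta)$ is the number of crossing pairs of members of $\Delta$ (counted with multiplicity). Moves: for $a>b>c>d$, (A) replaces arcs $(a,c),(b,d)$ by $(a,d),(b,c)$; (C) replaces arcs $(a,c),(b,d)$ by $(a,b),(c,d)$; for $a>b>c$, (B) replaces arc $(a,c)$ and pole $(\infty,b)$ by arc $(a,b)$ and pole $(\infty,c)$; (D) replaces arc $(a,c)$ and pole $(\infty,b)$ by arc $(b,c)$ and pole $(\infty,a)$;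 all other members stay unchanged. $\Delta\le_{\rm arc}\Delta'$ iff $\Delta$ is obtained from $\Delta'$ by a finite (possibly empty) sequence of such moves. A chain in a poset is saturated if it has no refinement, i.e. it is not properly contained in any other chain of the poset. *)

theory Defs
  imports Main "HOL-Library.Multiset" "HOL-Library.Extended_Nat"
begin

definition is_partition :: "nat list \<Rightarrow> bool" where
  "is_partition lam \<longleftrightarrow> sorted_wrt (\<ge>) lam \<and> 0 \<notin> set lam"

text \<open>Conjugate partition: conj_part lam i = lambda'_i = number of parts \<ge> i (for i \<ge> 1).\<close>
definition conj_part :: "nat list \<Rightarrow> nat \<Rightarrow> nat" where
  "conj_part lam i = length (filter (\<lambda>x. i \<le> x) lam)"

text \<open>A member (arc or pole) is a pair (source, target); source \<infinity> means a pole.\<close>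
type_synonym member = "enat \<times> nat"
type_synonym diagram = "member multiset"

definition arc_diagrams :: "nat list \<Rightarrow> nat list \<Rightarrow> nat list \<Rightarrow> diagram set" where
  "arc_diagrams alpha beta gamma =
     {D. (\<forall>x\<in>#D. 1 \<le> snd x \<and> enat (snd x) < fst x)
       \<and> size (filter_mset (\<lambda>x. fst x \<noteq> \<infinity>) D) = conj_part alpha 2
       \<and> int (size (filter_mset (\<lambda>x. fst x = \<infinity>) D)) = int (conj_part alpha 1) - int (conj_part alpha 2)
       \<and> (\<forall>i\<ge>1. int (size (filter_mset (\<lambda>x. fst x = enat i \<or> snd x = i) D))
                  = int (conj_part beta i) - int (conj_part gamma i))}"

definition arc_move :: "diagram \<Rightarrow> diagram \<Rightarrow> bool" where
  "arc_move D' D \<longleftrightarrow>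
    (\<exists>a b c d :: nat. a > b \<and> b > c \<and> c > d \<and>
        {#(enat a, c), (enat b, d)#} \<subseteq># D' \<and>
        (D = D' - {#(enat a, c), (enat b, d)#} + {#(enat a, d), (enat b, c)#} \<or>
         D = D' - {#(enat a, c), (enat b, d)#} + {#(enat a, b), (enat c, d)#}))
  \<or> (\<exists>a b c :: nat. a > b \<and> b > c \<and>
        {#(enat a, c), (\<infinity>, b)#} \<subseteq># D' \<and>
        (D = D' - {#(enat a, c), (\<infinity>, b)#} + {#(enat a, b), (\<infinity>, c)#} \<or>
         D = D' - {#(enat a, c), (\<infinity>, b)#} + {#(enat b, c), (\<infinity>, a)#}))"

definition arc_le :: "diagram \<Rightarrow> diagram \<Rightarrow> bool" where
  "arc_le D D' \<longleftrightarrow> arc_move\<^sup>*\<^sup>* D' D"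

definition is_chain_in :: "diagram set \<Rightarrow> diagram set \<Rightarrow> bool" where
  "is_chain_in P C \<longleftrightarrow> C \<subseteq> P \<and> (\<forall>x\<in>C. \<forall>y\<in>C. arc_le x y \<or> arc_le y x)"

definition saturated_chain_in :: "diagram set \<Rightarrow> diagram set \<Rightarrow> bool" where
  "saturated_chain_in P C \<longleftrightarrow> is_chain_in P C \<and> \<not> (\<exists>C'. is_chain_in P C' \<and> C \<subset> C')"

end

theory Submission
  imports Defs
begin

text \<open>The crossing number x(D) ranks the poset: every move lowers it, and a move lowering it
  by two or more factors into several moves, because some third member crosses the moved pair
  and provides an intermediate diagram. A diagram admitting no move has no crossings. Since the
  skew shape beta/gamma is a vertical strip, every integer is an endpoint of at most one member,
  so in a diagram that is not the result of any move every arc crosses every other member; all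
  such diagrams therefore have the same crossing number. Hence every saturated chain starts at
  this top value, ends at 0, and meets every value in between exactly once.\<close>

section \<open>Graded move systems\<close>

locale graded_moves =
  fixes P :: "'a set" and step :: "'a \<Rightarrow> 'a \<Rightarrow> bool" and rank :: "'a \<Rightarrow> nat" and top_rank :: nat
  assumes finite_P: "finite P"
    and step_closed: "x \<in> P \<Longrightarrow> step x y \<Longrightarrow> y \<in> P"
    and step_rank_less: "x \<in> P \<Longrightarrow> step x y \<Longrightarrow> rank y < rank x"
    and step_splits: "x \<in> P \<Longrightarrow> step x y \<Longrightarrow> rank y + 2 \<le> rank x \<Longrightarrow> \<exists>z. step x z \<and> step\<^sup>+\<^sup>+ z y"
    and rank_maximal: "x \<in> P \<Longrightarrow> \<forall>u\<in>P. \<not> step u x \<Longrightarrow> rank x = top_rank"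
    and rank_minimal: "x \<in> P \<Longrightarrow> \<forall>u. \<not> step x u \<Longrightarrow> rank x = 0"
begin

definition chain :: "'a set \<Rightarrow> bool" where
  "chain C \<longleftrightarrow> C \<subseteq> P \<and> (\<forall>x\<in>C. \<forall>y\<in>C. step\<^sup>*\<^sup>* x y \<or> step\<^sup>*\<^sup>* y x)"

definition saturated :: "'a set \<Rightarrow> bool" where
  "saturated C \<longleftrightarrow> chain C \<and> \<not> (\<exists>C'. chain C' \<and> C \<subset> C')"

lemma steps_closed_rank_less:
  assumes "step\<^sup>*\<^sup>* x y" "x \<in> P"
  shows "y \<in> P \<and> (x \<noteq> y \<longrightarrow> rank y < rank x)"
  using assms
proof (induction rule: rtranclp_induct)
  case (step y z)
  then have "y \<in> P" by blast
  then have "z \<in> P" "rank z < rank y"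
    using step.hyps(2) step_closed step_rank_less by blast+
  then show ?case using step.IH by (metis \<open>x \<in> P\<close> less_trans)
qed simp

lemma steps_rank_le: "step\<^sup>*\<^sup>* x y \<Longrightarrow> x \<in> P \<Longrightarrow> rank y \<le> rank x"
  using steps_closed_rank_less by fastforce

lemma steps_interpolate:
  assumes "x \<in> P" "step\<^sup>+\<^sup>+ x y" "rank y + 1 < rank x"
  obtains z where "step\<^sup>*\<^sup>* x z" "step\<^sup>*\<^sup>* z y" "rank y < rank z" "rank z < rank x"
proof -
  obtain w where xw: "step x w" and wy: "step\<^sup>*\<^sup>* w y"
    using assms(2) by (meson tranclpD)
  have wP: "w \<in> P" using step_closed assms(1) xw by blast
  show thesis
  proof (cases "w = y")
    case True
    then obtain z where xz: "step x z" and zy: "step\<^sup>+\<^sup>+ z y"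
      using step_splits assms xw by fastforce
    have zP: "z \<in> P" using step_closed assms(1) xz by blast
    obtain v where zv: "step z v" and vy: "step\<^sup>*\<^sup>* v y" using zy by (meson tranclpD)
    have "rank y \<le> rank v" using steps_rank_le[OF vy step_closed[OF zP zv]] .
    also have "rank v < rank z" using step_rank_less[OF zP zv] .
    finally have "rank y < rank z" .
    moreover have "rank z < rank x" using step_rank_less[OF assms(1) xz] .
    ultimately show thesis using that xz zy by (meson r_into_rtranclp tranclp_into_rtranclp)
  next
    case False
    then show thesis
      using that xw wy steps_closed_rank_less[OF wy wP] step_rank_less[OF assms(1) xw] by blast
  qed
qed

lemma chain_rank_le_steps:
  assumes "chain C" "x \<in> C" "y \<in> C" "rank x \<le> rank y"
  shows "step\<^sup>*\<^sup>* y x"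
proof (rule ccontr)
  assume "\<not> step\<^sup>*\<^sup>* y x"
  then have "step\<^sup>*\<^sup>* x y" "x \<noteq> y" using assms(1-3) unfolding chain_def by auto
  then show False using steps_closed_rank_less assms unfolding chain_def by fastforce
qed

lemma inj_on_rank_chain:
  assumes "chain C"
  shows "inj_on rank C"
proof (rule inj_onI)
  fix x y assume "x \<in> C" "y \<in> C" "rank x = rank y"
  then show "x = y"
    using assms chain_rank_le_steps[of C x y] steps_closed_rank_less[of y x] unfolding chain_def by auto
qed

lemma saturated_comparable_mem:
  assumes "saturated C" "z \<in> P" "\<forall>w\<in>C. step\<^sup>*\<^sup>* w z \<or> step\<^sup>*\<^sup>* z w"
  shows "z \<in> C"
proof (rule ccontr)
  assume "z \<notin> C"
  then have "chain (insert z C)" "C \<subset> insert z C"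
    using assms unfolding saturated_def chain_def by auto
  then show False using assms(1) unfolding saturated_def by blast
qed

lemma saturated_max_rank:
  assumes "saturated C" "t \<in> C" "\<forall>w\<in>C. rank w \<le> rank t"
  shows "rank t = top_rank"
proof (rule rank_maximal)
  have ch: "chain C" using assms(1) unfolding saturated_def by blast
  show tP: "t \<in> P" using ch assms(2) unfolding chain_def by blast
  show "\<forall>u\<in>P. \<not> step u t"
  proof (intro ballI notI)
    fix u assume u: "u \<in> P" "step u t"
    have "step\<^sup>*\<^sup>* u w" if "w \<in> C" for w
      using chain_rank_le_steps[OF ch that assms(2)] assms(3) that u(2)
      by (meson converse_rtranclp_into_rtranclp)
    then have "u \<in> C" using saturated_comparable_mem[OF assms(1) u(1)] by blast
    then show False using assms(3) step_rank_less[OF u] by fastforce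
  qed
qed

lemma saturated_min_rank:
  assumes "saturated C" "b \<in> C" "\<forall>w\<in>C. rank b \<le> rank w"
  shows "rank b = 0"
proof (rule rank_minimal)
  have ch: "chain C" using assms(1) unfolding saturated_def by blast
  show bP: "b \<in> P" using ch assms(2) unfolding chain_def by blast
  show "\<forall>u. \<not> step b u"
  proof (intro allI notI)
    fix u assume u: "step b u"
    have "step\<^sup>*\<^sup>* w u" if "w \<in> C" for w
      using chain_rank_le_steps[OF ch assms(2) that] assms(3) that u by auto
    then have "u \<in> C" using saturated_comparable_mem[OF assms(1) step_closed[OF bP u]] by blast
    then show False using assms(3) step_rank_less[OF bP u] by fastforce
  qed
qed

lemma saturated_consecutive_ranks:
  assumes "saturated C" "y \<in> C" "x \<in> C" "rank y + 1 < rank x"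
  obtains w where "w \<in> C" "rank y < rank w" "rank w < rank x"
proof -
  have ch: "chain C" using assms(1) unfolding saturated_def by blast
  have xP: "x \<in> P" using ch assms(3) unfolding chain_def by blast
  have "step\<^sup>*\<^sup>* x y" "x \<noteq> y" using chain_rank_le_steps[OF ch assms(2,3)] assms(4) by auto
  then have "step\<^sup>+\<^sup>+ x y" by (meson rtranclpD)
  then obtain z where xz: "step\<^sup>*\<^sup>* x z" and zy: "step\<^sup>*\<^sup>* z y"
    and rz: "rank y < rank z" "rank z < rank x"
    using steps_interpolate[OF xP _ assms(4)] by blast
  note between = that
  show thesis
  proof (rule ccontr)
    assume "\<not> thesis"
    then have outside: "rank w \<le> rank y \<or> rank x \<le> rank w" if "w \<in> C" for w
      using between[OF that] by (meson not_le)
    have "step\<^sup>*\<^sup>* w z \<or> step\<^sup>*\<^sup>* z w" if w: "w \<in> C" for w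
      using outside[OF w] chain_rank_le_steps[OF ch w assms(2)] chain_rank_le_steps[OF ch assms(3) w] xz zy
      by (meson rtranclp_trans)
    moreover have "z \<in> P" using steps_closed_rank_less[OF xz xP] by blast
    ultimately have "z \<in> C" using saturated_comparable_mem[OF assms(1)] by blast
    then show False using outside rz by fastforce
  qed
qed

lemma saturated_rank_gap_free:
  assumes "saturated C" "y \<in> C" "x \<in> C" "rank y < j" "j < rank x"
  shows "j \<in> rank ` C"
proof (rule ccontr)
  assume gap: "j \<notin> rank ` C"
  have "finite C" using assms(1) finite_P unfolding saturated_def chain_def by (blast intro: finite_subset)
  define below where "below = {w\<in>C. rank w < j}"
  define above where "above = {w\<in>C. j < rank w}"
  have "finite below" "finite above" "y \<in> below" "x \<in> above"
    using \<open>finite C\<close> assms unfolding below_def above_def by auto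
  then obtain y' x' where y': "y' \<in> below" "Max (rank ` below) = rank y'"
    and x': "x' \<in> above" "Min (rank ` above) = rank x'"
    by (metis empty_iff obtains_MAX obtains_MIN)
  have y'_max: "rank w \<le> rank y'" if "w \<in> C" "rank w < j" for w
  proof -
    have "rank w \<in> rank ` below" using that unfolding below_def by blast
    then show ?thesis using y'(2) Max_ge[of "rank ` below"] \<open>finite below\<close> by simp
  qed
  have x'_min: "rank x' \<le> rank w" if "w \<in> C" "j < rank w" for w
  proof -
    have "rank w \<in> rank ` above" using that unfolding above_def by blast
    then show ?thesis using x'(2) Min_le[of "rank ` above"] \<open>finite above\<close> by simp
  qed
  have "y' \<in> C" "rank y' < j" "x' \<in> C" "j < rank x'"
    using y'(1) x'(1) unfolding below_def above_def by auto
  then obtain w where "w \<in> C" "rank y' < rank w" "rank w < rank x'"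
    using saturated_consecutive_ranks[OF assms(1)] by (metis Suc_eq_plus1 Suc_lessI less_trans_Suc)
  then show False using y'_max x'_min gap by (metis image_eqI nat_neq_iff not_le)
qed

lemma saturated_card:
  assumes "saturated C"
  shows "finite C \<and> card C = (if P = {} then 0 else top_rank + 1)"
proof -
  have ch: "chain C" using assms unfolding saturated_def by blast
  have finC: "finite C" using ch finite_P unfolding chain_def by (blast intro: finite_subset)
  show ?thesis
  proof (cases "P = {}")
    case True
    then show ?thesis using ch finC unfolding chain_def by auto
  next
    case False
    then obtain p where "p \<in> P" by blast
    have "C \<noteq> {}"
    proof
      assume "C = {}"
      then show False using saturated_comparable_mem[OF assms \<open>p \<in> P\<close>] by simp
    qed
    then obtain t b where t: "t \<in> C" "Max (rank ` C) = rank t" and b: "b \<in> C" "Min (rank ` C) = rank b"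
      using finC by (metis obtains_MAX obtains_MIN)
    have t_max: "\<forall>w\<in>C. rank w \<le> rank t" using t finC by (metis Max_ge finite_imageI image_eqI)
    have b_min: "\<forall>w\<in>C. rank b \<le> rank w" using b finC by (metis Min_le finite_imageI image_eqI)
    have "rank ` C = {0..top_rank}"
    proof
      show "rank ` C \<subseteq> {0..top_rank}" using saturated_max_rank[OF assms t(1) t_max] t_max by auto
      show "{0..top_rank} \<subseteq> rank ` C"
      proof
        fix j assume j: "j \<in> {0..top_rank}"
        show "j \<in> rank ` C"
        proof (cases "j = 0 \<or> j = top_rank")
          case True
          then show ?thesis using saturated_max_rank[OF assms t(1) t_max]
            saturated_min_rank[OF assms b(1) b_min] t(1) b(1) by force
        next
          case False
          then show ?thesis using saturated_rank_gap_free[OF assms b(1) t(1)] j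
            saturated_max_rank[OF assms t(1) t_max] saturated_min_rank[OF assms b(1) b_min] by auto
        qed
      qed
    qed
    then have "card C = top_rank + 1" using card_image[OF inj_on_rank_chain[OF ch]] by simp
    then show ?thesis using finC False by simp
  qed
qed

end

section \<open>Crossings\<close>

definition crosses :: "member \<Rightarrow> member \<Rightarrow> bool" where
  "crosses u v \<longleftrightarrow> (snd v < snd u \<and> enat (snd u) < fst v \<and> fst v < fst u)
                 \<or> (snd u < snd v \<and> enat (snd v) < fst u \<and> fst u < fst v)"

lemma crosses_arc_arc [simp]:
  "crosses (enat m, n) (enat k, r) \<longleftrightarrow> (r < n \<and> n < k \<and> k < m) \<or> (n < r \<and> r < m \<and> m < k)"
  by (simp add: crosses_def)

lemma crosses_arc_pole [simp]: "crosses (enat m, n) (\<infinity>, r) \<longleftrightarrow> n < r \<and> r < m"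
  by (auto simp: crosses_def)

lemma crosses_pole_arc [simp]: "crosses (\<infinity>, n) (enat k, r) \<longleftrightarrow> r < n \<and> n < k"
  by (auto simp: crosses_def)

lemma not_crosses_pole_pole [simp]: "\<not> crosses (\<infinity>, n) (\<infinity>, r)"
  by (simp add: crosses_def)

lemma crosses_commute: "crosses u v \<longleftrightarrow> crosses v u"
  unfolding crosses_def by blast

lemma not_crosses_self [simp]: "\<not> crosses u u"
  by (auto simp: crosses_def)

definition cross_count :: "member \<Rightarrow> diagram \<Rightarrow> nat" where
  "cross_count u D = size (filter_mset (crosses u) D)"

definition crossing_total :: "diagram \<Rightarrow> nat" where
  "crossing_total D = (\<Sum>u\<in>#D. cross_count u D)"

text \<open>The crossing number x(D) of the paper: each crossing pair is counted twice in
  crossing_total.\<close>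
definition crossing_number :: "diagram \<Rightarrow> nat" where
  "crossing_number D = crossing_total D div 2"

lemma cross_count_empty [simp]: "cross_count u {#} = 0"
  and cross_count_add_mset [simp]: "cross_count u (add_mset v D) = (if crosses u v then 1 else 0) + cross_count u D"
  and cross_count_union [simp]: "cross_count u (D + E) = cross_count u D + cross_count u E"
  by (simp_all add: cross_count_def)

lemma sum_cross_count_commute: "(\<Sum>u\<in>#D. cross_count u E) = (\<Sum>u\<in>#E. cross_count u D)"
proof (induction D)
  case (add v D)
  have "(\<Sum>u\<in>#E. if crosses u v then 1 else 0) = cross_count v E"
    unfolding cross_count_def by (induction E) (auto simp: crosses_commute)
  then show ?case using add by (simp add: sum_mset.distrib)
qed simp

lemma crossing_total_union:
  "crossing_total (D + E) = crossing_total D + crossing_total E + 2 * (\<Sum>u\<in>#D. cross_count u E)"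
  using sum_cross_count_commute[of D E] by (simp add: crossing_total_def sum_mset.distrib)

lemma crossing_total_pair: "crossing_total {#u, v#} = (if crosses u v then 2 else 0)"
  by (simp add: crossing_total_def crosses_commute)

text \<open>Stating the source and target as equations lets these rules apply to diagrams whose
  members are listed in any order.\<close>
lemma arc_move_A:
  "a > b \<Longrightarrow> b > c \<Longrightarrow> c > d \<Longrightarrow> S = Q + {#(enat a, c), (enat b, d)#} \<Longrightarrow>
   T = Q + {#(enat a, d), (enat b, c)#} \<Longrightarrow> arc_move S T"
  unfolding arc_move_def by (intro disjI1 exI[of _ a] exI[of _ b] exI[of _ c] exI[of _ d]) simp

lemma arc_move_C:
  "a > b \<Longrightarrow> b > c \<Longrightarrow> c > d \<Longrightarrow> S = Q + {#(enat a, c), (enat b, d)#} \<Longrightarrow>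
   T = Q + {#(enat a, b), (enat c, d)#} \<Longrightarrow> arc_move S T"
  unfolding arc_move_def by (intro disjI1 exI[of _ a] exI[of _ b] exI[of _ c] exI[of _ d]) simp

lemma arc_move_B:
  "a > b \<Longrightarrow> b > c \<Longrightarrow> S = Q + {#(enat a, c), (\<infinity>, b)#} \<Longrightarrow>
   T = Q + {#(enat a, b), (\<infinity>, c)#} \<Longrightarrow> arc_move S T"
  unfolding arc_move_def by (intro disjI2 exI[of _ a] exI[of _ b] exI[of _ c]) simp

lemma arc_move_D:
  "a > b \<Longrightarrow> b > c \<Longrightarrow> S = Q + {#(enat a, c), (\<infinity>, b)#} \<Longrightarrow>
   T = Q + {#(enat b, c), (\<infinity>, a)#} \<Longrightarrow> arc_move S T"
  unfolding arc_move_def by (intro disjI2 exI[of _ a] exI[of _ b] exI[of _ c]) simp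

definition arc_move_splits :: "diagram \<Rightarrow> diagram \<Rightarrow> bool" where
  "arc_move_splits D D' \<longleftrightarrow> (\<exists>z. arc_move D z \<and> arc_move\<^sup>+\<^sup>+ z D')"

lemma arc_move_splits_2: "arc_move x y \<Longrightarrow> arc_move y z \<Longrightarrow> arc_move_splits x z"
  unfolding arc_move_splits_def by blast

lemma arc_move_splits_3: "arc_move x y \<Longrightarrow> arc_move y z \<Longrightarrow> arc_move z w \<Longrightarrow> arc_move_splits x w"
  unfolding arc_move_splits_def by (meson tranclp.r_into_trancl tranclp.trancl_into_trancl)

lemma pair_subset_mset:
  assumes "u \<in># D" "v \<in># D" "u \<noteq> v"
  shows "{#u, v#} \<subseteq># D"
proof -
  obtain D1 where D1: "D = add_mset u D1" using assms(1) by (metis multi_member_split)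
  then obtain D2 where "D1 = add_mset v D2" using assms(2,3) by (metis insert_noteq_member multi_member_split)
  then show ?thesis using D1 by simp
qed

lemma crossing_pair_arc_move:
  assumes sub: "{#u, v#} \<subseteq># D" and cross: "crosses u v"
  shows "\<exists>D'. arc_move D D'"
proof -
  have move_A: "\<exists>D'. arc_move D D'" if "a > b" "b > c" "c > d" "{#(enat a, c), (enat b, d)#} \<subseteq># D" for a b c d
    using arc_move_A[OF that(1-3) subset_mset.diff_add[OF that(4), symmetric] refl] by blast
  have move_B: "\<exists>D'. arc_move D D'" if "a > b" "b > c" "{#(enat a, c), (\<infinity>, b)#} \<subseteq># D" for a b c
    using arc_move_B[OF that(1-2) subset_mset.diff_add[OF that(3), symmetric] refl] by blast
  have sub': "{#v, u#} \<subseteq># D" using sub by (simp add: add_mset_commute)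
  obtain eu nu ev nv where u: "u = (eu, nu)" and v: "v = (ev, nv)" by (cases u, cases v)
  show ?thesis
  proof (cases eu; cases ev)
    fix m k assume "eu = enat m" "ev = enat k"
    then show ?thesis
      using cross sub sub' u v move_A[where a=m and b=k and c=nu and d=nv] move_A[where a=k and b=m and c=nv and d=nu]
      by auto
  next
    fix m assume "eu = enat m" "ev = \<infinity>"
    then show ?thesis using cross sub u v move_B[where a=m and b=nv and c=nu] by auto
  next
    fix k assume "eu = \<infinity>" "ev = enat k"
    then show ?thesis using cross sub' u v move_B[where a=k and b=nu and c=nv] by auto
  next
    assume "eu = \<infinity>" "ev = \<infinity>"
    then show ?thesis using cross u v by simp
  qed
qed

lemma crossing_total_pos_arc_move:
  assumes "0 < crossing_total D"
  shows "\<exists>D'. arc_move D D'"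
proof -
  have "\<exists>u\<in>#D. 0 < cross_count u D"
  proof (rule ccontr)
    assume "\<not> ?thesis"
    then have "crossing_total D = (\<Sum>u\<in>#D. 0)"
      unfolding crossing_total_def by (intro arg_cong[where f = sum_mset] image_mset_cong) simp
    with assms show False by simp
  qed
  then obtain u where u: "u \<in># D" "0 < cross_count u D" by blast
  then have "filter_mset (crosses u) D \<noteq> {#}" unfolding cross_count_def using nonempty_has_size by blast
  then obtain v where "v \<in># filter_mset (crosses u) D" by (meson multiset_nonemptyE)
  then have v: "v \<in># D" "crosses u v" by auto
  then have "u \<noteq> v" by auto
  then show ?thesis using crossing_pair_arc_move[OF pair_subset_mset[OF u(1) v(1)] v(2)] by blast
qed

abbreviation touches :: "nat \<Rightarrow> member \<Rightarrow> bool" where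
  "touches i x \<equiv> fst x = enat i \<or> snd x = i"

definition endpoints :: "diagram \<Rightarrow> nat set" where
  "endpoints M = {i. \<exists>x\<in>#M. touches i x}"

lemma endpoints_empty [simp]: "endpoints {#} = {}"
  and endpoints_add_arc [simp]: "endpoints (add_mset (enat a, c) M) = insert a (insert c (endpoints M))"
  and endpoints_add_pole [simp]: "endpoints (add_mset (\<infinity>, b) M) = insert b (endpoints M)"
  by (auto simp: endpoints_def)

definition endpoints_distinct :: "diagram \<Rightarrow> bool" where
  "endpoints_distinct D \<longleftrightarrow> (\<forall>i. size (filter_mset (touches i) D) \<le> 1)"

lemma endpoints_distinct_pair:
  assumes "endpoints_distinct D" "{#x, y#} \<subseteq># D" "touches i x" "touches i y"
  shows False
proof -
  have "size (filter_mset (touches i) {#x, y#}) \<le> size (filter_mset (touches i) D)"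
    using assms(2) by (intro size_mset_mono multiset_filter_mono)
  moreover have "size (filter_mset (touches i) {#x, y#}) = 2" using assms(3,4) by simp
  moreover have "size (filter_mset (touches i) D) \<le> 1"
    using assms(1) unfolding endpoints_distinct_def by blast
  ultimately show False by linarith
qed

lemma endpoints_distinct_avoid:
  assumes "endpoints_distinct (R + M)" "f \<in># R" "touches i f"
  shows "i \<notin> endpoints M"
proof
  assume "i \<in> endpoints M"
  then obtain x where "x \<in># M" "touches i x" unfolding endpoints_def by blast
  moreover have "{#f, x#} \<subseteq># R + M"
    using assms(2) \<open>x \<in># M\<close> by (auto dest!: multi_member_split)
  ultimately show False using endpoints_distinct_pair[OF assms(1)] assms(3) by blast
qed

lemma endpoints_distinct_count_le_1:
  assumes "endpoints_distinct D"
  shows "count D u \<le> 1"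
proof (rule ccontr)
  assume "\<not> count D u \<le> 1"
  then have "2 \<le> count D u" by simp
  then have "replicate_mset 2 u \<subseteq># D" by (simp add: count_le_replicate_mset_subset_eq)
  then have "{#u, u#} \<subseteq># D" by (simp add: numeral_2_eq_2)
  then show False using endpoints_distinct_pair[OF assms, of u u "snd u"] by simp
qed

lemma cross_count_crosses_all:
  assumes "u \<in># D" "count D u = 1" "\<And>x. x \<in># D \<Longrightarrow> x \<noteq> u \<Longrightarrow> crosses u x"
  shows "cross_count u D = size D - 1"
proof -
  have "filter_mset (crosses u) D = filter_mset (\<lambda>x. x \<noteq> u) D"
    by (rule filter_mset_cong[OF refl]) (use assms(3) not_crosses_self in blast)
  also have "\<dots> = D - {#u#}" using assms(2) by (intro multiset_eqI) auto
  finally show ?thesis unfolding cross_count_def using size_Diff_singleton[OF assms(1)] by simp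
qed

lemma cross_count_pole:
  assumes "u \<in># D" "fst u = \<infinity>" "\<And>x. x \<in># D \<Longrightarrow> fst x \<noteq> \<infinity> \<Longrightarrow> crosses x u"
  shows "cross_count u D = size (filter_mset (\<lambda>x. fst x \<noteq> \<infinity>) D)"
proof -
  have "crosses u x \<longleftrightarrow> fst x \<noteq> \<infinity>" if "x \<in># D" for x
  proof
    assume "fst x \<noteq> \<infinity>"
    then show "crosses u x" using assms(3)[OF that] crosses_commute by blast
  qed (use assms(2) in \<open>auto simp: crosses_def\<close>)
  then have "filter_mset (crosses u) D = filter_mset (\<lambda>x. fst x \<noteq> \<infinity>) D"
    by (rule filter_mset_cong[OF refl])
  then show ?thesis unfolding cross_count_def by (simp only:)
qed

lemma crossing_number_all_arcs_cross:
  assumes distinct: "endpoints_distinct D"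
    and cross: "\<And>u v. {#u, v#} \<subseteq># D \<Longrightarrow> fst u \<noteq> \<infinity> \<Longrightarrow> crosses u v"
  shows "crossing_number D = (size (filter_mset (\<lambda>x. fst x \<noteq> \<infinity>) D) choose 2)
    + size (filter_mset (\<lambda>x. fst x \<noteq> \<infinity>) D) * size (filter_mset (\<lambda>x. fst x = \<infinity>) D)"
proof -
  define arcs where "arcs = filter_mset (\<lambda>x. fst x \<noteq> \<infinity>) D"
  define poles where "poles = filter_mset (\<lambda>x. fst x = \<infinity>) D"
  have D_split: "D = arcs + poles" unfolding arcs_def poles_def by (rule multiset_eqI) simp
  have arc_count: "cross_count u D = size D - 1" if u: "u \<in># arcs" for u
  proof (rule cross_count_crosses_all)
    show uD: "u \<in># D" and "count D u = 1"
      using u endpoints_distinct_count_le_1[OF distinct, of u] unfolding arcs_def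
      by (auto simp: le_Suc_eq count_eq_zero_iff)
    show "crosses u x" if "x \<in># D" "x \<noteq> u" for x
      using cross[OF pair_subset_mset[OF uD that(1) not_sym[OF that(2)]]] u unfolding arcs_def by auto
  qed
  have pole_count: "cross_count u D = size arcs" if u: "u \<in># poles" for u
    unfolding arcs_def
  proof (rule cross_count_pole)
    show uD: "u \<in># D" and "fst u = \<infinity>" using u unfolding poles_def by auto
    show "crosses x u" if "x \<in># D" "fst x \<noteq> \<infinity>" for x
    proof -
      have "x \<noteq> u" using that(2) \<open>fst u = \<infinity>\<close> by auto
      then show ?thesis using cross[OF pair_subset_mset[OF that(1) uD] that(2)] by blast
    qed
  qed
  have "crossing_total D = (\<Sum>u\<in>#arcs. cross_count u D) + (\<Sum>u\<in>#poles. cross_count u D)"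
    unfolding crossing_total_def by (subst (1) D_split) simp
  also have "\<dots> = (\<Sum>u\<in>#arcs. size D - 1) + (\<Sum>u\<in>#poles. size arcs)"
    using arc_count pole_count
    by (intro arg_cong2[where f = "(+)"] arg_cong[where f = sum_mset] image_mset_cong) simp_all
  also have "\<dots> = size arcs * (size arcs - 1) + 2 * (size arcs * size poles)"
    unfolding D_split by (cases "size arcs") (simp_all add: algebra_simps)
  finally show ?thesis
    unfolding crossing_number_def choose_two arcs_def[symmetric] poles_def[symmetric] by simp
qed

section \<open>Replacing a crossing pair\<close>

definition replacement_respects :: "member \<Rightarrow> diagram \<Rightarrow> diagram \<Rightarrow> bool" where
  "replacement_respects f M N \<longleftrightarrow> cross_count f N \<le> cross_count f M \<and>
     (cross_count f N < cross_count f M \<longrightarrow> (\<forall>Q. arc_move_splits (add_mset f Q + M) (add_mset f Q + N)))"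

lemma replacement_respects_rest:
  assumes distinct: "endpoints_distinct (R + M)" and valid: "\<forall>x\<in>#R. enat (snd x) < fst x"
    and arc: "\<And>e g. g < e \<Longrightarrow> e \<notin> endpoints M \<Longrightarrow> g \<notin> endpoints M \<Longrightarrow> replacement_respects (enat e, g) M N"
    and pole: "\<And>g. g \<notin> endpoints M \<Longrightarrow> replacement_respects (\<infinity>, g) M N"
    and f: "f \<in># R"
  shows "replacement_respects f M N"
proof -
  obtain e g where fe: "f = (e, g)" by (cases f)
  have g: "g \<notin> endpoints M" using endpoints_distinct_avoid[OF distinct f] fe by simp
  show ?thesis
  proof (cases e)
    case (enat e')
    then have "e' \<notin> endpoints M" "g < e'"
      using endpoints_distinct_avoid[OF distinct f] valid f fe by auto
    then show ?thesis using arc g fe enat by blast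
  qed (use pole g fe in simp)
qed

text \<open>M is a crossing pair and N an uncrossed one, so the crossing number drops by one plus
  the number of crossings with the rest R that are lost.\<close>
lemma crossing_number_replace:
  assumes M: "crossing_total M = 2" and N: "crossing_total N = 0"
    and respects: "\<And>f. f \<in># R \<Longrightarrow> replacement_respects f M N"
  shows "crossing_number (R + N) < crossing_number (R + M)"
    and "crossing_number (R + N) + 2 \<le> crossing_number (R + M) \<Longrightarrow> arc_move_splits (R + M) (R + N)"
proof -
  define sM where "sM = (\<Sum>u\<in>#R. cross_count u M)"
  define sN where "sN = (\<Sum>u\<in>#R. cross_count u N)"
  have "sN \<le> sM"
    unfolding sM_def sN_def using respects by (intro sum_mset_mono) (simp add: replacement_respects_def)
  moreover have "crossing_total (R + M) = crossing_total R + 2 + 2 * sM"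
    and "crossing_total (R + N) = crossing_total R + 2 * sN"
    using crossing_total_union[of R] M N unfolding sM_def sN_def by simp_all
  ultimately have eq: "crossing_number (R + M) = crossing_number (R + N) + 1 + (sM - sN)"
    unfolding crossing_number_def by simp
  then show "crossing_number (R + N) < crossing_number (R + M)" by simp
  assume "crossing_number (R + N) + 2 \<le> crossing_number (R + M)"
  then have "sN < sM" using eq by simp
  have "\<exists>f\<in>#R. cross_count f N < cross_count f M"
  proof (rule ccontr)
    assume "\<not> ?thesis"
    then have "sM \<le> sN" unfolding sM_def sN_def by (intro sum_mset_mono) auto
    with \<open>sN < sM\<close> show False by simp
  qed
  then obtain f where f: "f \<in># R" "cross_count f N < cross_count f M" by blast
  then obtain Q where "R = add_mset f Q" by (metis multi_member_split)
  then show "arc_move_splits (R + M) (R + N)"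
    using respects f unfolding replacement_respects_def by blast
qed

lemma position_4:
  fixes x :: nat
  assumes "x \<notin> {a, b, c, d}" "a > b" "b > c" "c > d"
  shows "x < d \<or> d < x \<and> x < c \<or> c < x \<and> x < b \<or> b < x \<and> x < a \<or> a < x"
  using assms by auto

lemma position_3:
  fixes x :: nat
  assumes "x \<notin> {a, b, c}" "a > b" "b > c"
  shows "x < c \<or> c < x \<and> x < b \<or> b < x \<and> x < a \<or> a < x"
  using assms by auto

text \<open>The crossing counts are compared by a case analysis on the positions of the endpoints
  of the third member f; when they drop, f lies inside the moved pair and the replacement is
  performed as two or three moves that each involve f.\<close>
lemma move_A_respects_arc:
  assumes o: "a > b" "b > c" "c > d" and f: "g < e" "e \<notin> {a, b, c, d}" "g \<notin> {a, b, c, d}"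
  shows "replacement_respects (enat e, g) {#(enat a, c), (enat b, d)#} {#(enat a, d), (enat b, c)#}"
    (is "replacement_respects ?f ?M ?N")
proof -
  have "cross_count ?f ?N \<le> cross_count ?f ?M
    \<and> (cross_count ?f ?N < cross_count ?f ?M \<longrightarrow> b < e \<and> e < a \<and> d < g \<and> g < c)"
    using position_4[OF f(2) o] position_4[OF f(3) o] o f(1) by (elim disjE conjE) simp_all
  moreover have "arc_move_splits (add_mset ?f Q + ?M) (add_mset ?f Q + ?N)"
    if "b < e \<and> e < a \<and> d < g \<and> g < c" for Q
    using that o
    by (intro arc_move_splits_3[OF
        arc_move_A[where a=e and b=b and c=g and d=d and Q="add_mset (enat a, c) Q"]
        arc_move_A[where a=a and b=b and c=c and d=g and Q="add_mset (enat e, d) Q"]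
        arc_move_A[where a=a and b=e and c=g and d=d and Q="add_mset (enat b, c) Q"]])
      (auto simp: add_mset_commute)
  ultimately show ?thesis unfolding replacement_respects_def by blast
qed

lemma move_A_respects_pole:
  assumes o: "a > b" "b > c" "c > d" and f: "g \<notin> {a, b, c, d}"
  shows "replacement_respects (\<infinity>, g) {#(enat a, c), (enat b, d)#} {#(enat a, d), (enat b, c)#}"
    (is "replacement_respects ?f ?M ?N")
proof -
  have "cross_count ?f ?N = cross_count ?f ?M"
    using position_4[OF f o] o by (elim disjE conjE) simp_all
  then show ?thesis unfolding replacement_respects_def by simp
qed

lemma move_C_respects_arc:
  assumes o: "a > b" "b > c" "c > d" and f: "g < e" "e \<notin> {a, b, c, d}" "g \<notin> {a, b, c, d}"
  shows "replacement_respects (enat e, g) {#(enat a, c), (enat b, d)#} {#(enat a, b), (enat c, d)#}"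
    (is "replacement_respects ?f ?M ?N")
proof -
  have "cross_count ?f ?N \<le> cross_count ?f ?M
    \<and> (cross_count ?f ?N < cross_count ?f ?M
       \<longrightarrow> c < e \<and> e < b \<and> g < d \<or> a < e \<and> c < g \<and> g < b)"
    using position_4[OF f(2) o] position_4[OF f(3) o] o f(1) by (elim disjE conjE) simp_all
  moreover have "arc_move_splits (add_mset ?f Q + ?M) (add_mset ?f Q + ?N)"
    if "c < e \<and> e < b \<and> g < d" for Q
    using that o
    by (intro arc_move_splits_3[OF
        arc_move_A[where a=b and b=e and c=d and d=g and Q="add_mset (enat a, c) Q"]
        arc_move_C[where a=a and b=e and c=c and d=d and Q="add_mset (enat b, g) Q"]
        arc_move_C[where a=a and b=b and c=e and d=g and Q="add_mset (enat c, d) Q"]])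
      (auto simp: add_mset_commute)
  moreover have "arc_move_splits (add_mset ?f Q + ?M) (add_mset ?f Q + ?N)"
    if "a < e \<and> c < g \<and> g < b" for Q
    using that o
    by (intro arc_move_splits_3[OF
        arc_move_C[where a=e and b=b and c=g and d=d and Q="add_mset (enat a, c) Q"]
        arc_move_C[where a=a and b=g and c=c and d=d and Q="add_mset (enat e, b) Q"]
        arc_move_A[where a=e and b=a and c=b and d=g and Q="add_mset (enat c, d) Q"]])
      (auto simp: add_mset_commute)
  ultimately show ?thesis unfolding replacement_respects_def by blast
qed

lemma move_C_respects_pole:
  assumes o: "a > b" "b > c" "c > d" and f: "g \<notin> {a, b, c, d}"
  shows "replacement_respects (\<infinity>, g) {#(enat a, c), (enat b, d)#} {#(enat a, b), (enat c, d)#}"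
    (is "replacement_respects ?f ?M ?N")
proof -
  have "cross_count ?f ?N \<le> cross_count ?f ?M
    \<and> (cross_count ?f ?N < cross_count ?f ?M \<longrightarrow> c < g \<and> g < b)"
    using position_4[OF f o] o by (elim disjE conjE) simp_all
  moreover have "arc_move_splits (add_mset ?f Q + ?M) (add_mset ?f Q + ?N)"
    if "c < g \<and> g < b" for Q
    using that o
    by (intro arc_move_splits_3[OF
        arc_move_D[where a=b and b=g and c=d and Q="add_mset (enat a, c) Q"]
        arc_move_C[where a=a and b=g and c=c and d=d and Q="add_mset (\<infinity>, b) Q"]
        arc_move_B[where a=a and b=b and c=g and Q="add_mset (enat c, d) Q"]])
      (auto simp: add_mset_commute)
  ultimately show ?thesis unfolding replacement_respects_def by blast
qed

lemma move_B_respects_arc: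
  assumes o: "a > b" "b > c" and f: "g < e" "e \<notin> {a, b, c}" "g \<notin> {a, b, c}"
  shows "replacement_respects (enat e, g) {#(enat a, c), (\<infinity>, b)#} {#(enat a, b), (\<infinity>, c)#}"
    (is "replacement_respects ?f ?M ?N")
proof -
  have "cross_count ?f ?N \<le> cross_count ?f ?M
    \<and> (cross_count ?f ?N < cross_count ?f ?M \<longrightarrow> a < e \<and> c < g \<and> g < b)"
    using position_3[OF f(2) o] position_3[OF f(3) o] o f(1) by (elim disjE conjE) simp_all
  moreover have "arc_move_splits (add_mset ?f Q + ?M) (add_mset ?f Q + ?N)"
    if "a < e \<and> c < g \<and> g < b" for Q
    using that o
    by (intro arc_move_splits_3[OF
        arc_move_A[where a=e and b=a and c=g and d=c and Q="add_mset (\<infinity>, b) Q"]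
        arc_move_B[where a=a and b=b and c=g and Q="add_mset (enat e, c) Q"]
        arc_move_B[where a=e and b=g and c=c and Q="add_mset (enat a, b) Q"]])
      (auto simp: add_mset_commute)
  ultimately show ?thesis unfolding replacement_respects_def by blast
qed

lemma move_B_respects_pole:
  assumes o: "a > b" "b > c" and f: "g \<notin> {a, b, c}"
  shows "replacement_respects (\<infinity>, g) {#(enat a, c), (\<infinity>, b)#} {#(enat a, b), (\<infinity>, c)#}"
    (is "replacement_respects ?f ?M ?N")
proof -
  have "cross_count ?f ?N \<le> cross_count ?f ?M
    \<and> (cross_count ?f ?N < cross_count ?f ?M \<longrightarrow> c < g \<and> g < b)"
    using position_3[OF f o] o by (elim disjE conjE) simp_all
  moreover have "arc_move_splits (add_mset ?f Q + ?M) (add_mset ?f Q + ?N)"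
    if "c < g \<and> g < b" for Q
    using that o
    by (intro arc_move_splits_2[OF
        arc_move_B[where a=a and b=g and c=c and Q="add_mset (\<infinity>, b) Q"]
        arc_move_B[where a=a and b=b and c=g and Q="add_mset (\<infinity>, c) Q"]])
      (auto simp: add_mset_commute)
  ultimately show ?thesis unfolding replacement_respects_def by blast
qed

lemma move_D_respects_arc:
  assumes o: "a > b" "b > c" and f: "g < e" "e \<notin> {a, b, c}" "g \<notin> {a, b, c}"
  shows "replacement_respects (enat e, g) {#(enat a, c), (\<infinity>, b)#} {#(enat b, c), (\<infinity>, a)#}"
    (is "replacement_respects ?f ?M ?N")
proof -
  have "cross_count ?f ?N \<le> cross_count ?f ?M
    \<and> (cross_count ?f ?N < cross_count ?f ?M \<longrightarrow> b < e \<and> e < a \<and> g < c)"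
    using position_3[OF f(2) o] position_3[OF f(3) o] o f(1) by (elim disjE conjE) simp_all
  moreover have "arc_move_splits (add_mset ?f Q + ?M) (add_mset ?f Q + ?N)"
    if "b < e \<and> e < a \<and> g < c" for Q
    using that o
    by (intro arc_move_splits_3[OF
        arc_move_D[where a=e and b=b and c=g and Q="add_mset (enat a, c) Q"]
        arc_move_A[where a=a and b=b and c=c and d=g and Q="add_mset (\<infinity>, e) Q"]
        arc_move_D[where a=a and b=e and c=g and Q="add_mset (enat b, c) Q"]])
      (auto simp: add_mset_commute)
  ultimately show ?thesis unfolding replacement_respects_def by blast
qed

lemma move_D_respects_pole:
  assumes o: "a > b" "b > c" and f: "g \<notin> {a, b, c}"
  shows "replacement_respects (\<infinity>, g) {#(enat a, c), (\<infinity>, b)#} {#(enat b, c), (\<infinity>, a)#}"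
    (is "replacement_respects ?f ?M ?N")
proof -
  have "cross_count ?f ?N \<le> cross_count ?f ?M
    \<and> (cross_count ?f ?N < cross_count ?f ?M \<longrightarrow> b < g \<and> g < a)"
    using position_3[OF f o] o by (elim disjE conjE) simp_all
  moreover have "arc_move_splits (add_mset ?f Q + ?M) (add_mset ?f Q + ?N)"
    if "b < g \<and> g < a" for Q
    using that o
    by (intro arc_move_splits_2[OF
        arc_move_D[where a=a and b=g and c=c and Q="add_mset (\<infinity>, b) Q"]
        arc_move_D[where a=g and b=b and c=c and Q="add_mset (\<infinity>, a) Q"]])
      (auto simp: add_mset_commute)
  ultimately show ?thesis unfolding replacement_respects_def by blast
qed

section \<open>Arc diagrams\<close>

lemma arc_diagrams_member:
  "D \<in> arc_diagrams alpha beta gamma \<Longrightarrow> x \<in># D \<Longrightarrow> 1 \<le> snd x \<and> enat (snd x) < fst x"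
  unfolding arc_diagrams_def by blast

lemma arc_diagrams_endpoints_distinct:
  assumes strip: "\<forall>i\<ge>1. conj_part beta i \<le> conj_part gamma i + 1"
    and D: "D \<in> arc_diagrams alpha beta gamma"
  shows "endpoints_distinct D"
  unfolding endpoints_distinct_def
proof
  fix i
  show "size (filter_mset (touches i) D) \<le> 1"
  proof (cases "i = 0")
    case True
    have "\<forall>x. x \<in># D \<longrightarrow> \<not> touches i x"
    proof (intro allI impI notI)
      fix x assume "x \<in># D" "touches i x"
      then show False using arc_diagrams_member[OF D] True by (fastforce simp: zero_enat_def[symmetric])
    qed
    then have "filter_mset (touches i) D = {#}" by (simp only: filter_mset_eq_mempty_iff)
    then show ?thesis by (simp del: filter_mset_eq_mempty_iff)
  next
    case False
    then have "int (size (filter_mset (touches i) D)) = int (conj_part beta i) - int (conj_part gamma i)"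
      using D unfolding arc_diagrams_def by auto
    moreover have "conj_part beta i \<le> conj_part gamma i + 1" using strip False by auto
    ultimately show ?thesis by linarith
  qed
qed

lemma size_filter_mset_replace:
  assumes "M \<subseteq># D" "size (filter_mset P N) = size (filter_mset P M)"
  shows "size (filter_mset P (D - M + N)) = size (filter_mset P D)"
proof -
  have sub: "filter_mset P M \<subseteq># filter_mset P D" using assms(1) by (rule multiset_filter_mono)
  have "size (filter_mset P (D - M + N)) = size (filter_mset P D - filter_mset P M) + size (filter_mset P N)"
    by simp
  also have "\<dots> = size (filter_mset P D)"
    using size_Diff_submset[OF sub] size_mset_mono[OF sub] assms(2) by simp
  finally show ?thesis .
qed

lemma arc_diagrams_replace:
  assumes D: "D \<in> arc_diagrams alpha beta gamma" and sub: "M \<subseteq># D"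
    and valid: "\<forall>x\<in>#N. 1 \<le> snd x \<and> enat (snd x) < fst x"
    and arcs: "size (filter_mset (\<lambda>x. fst x \<noteq> \<infinity>) N) = size (filter_mset (\<lambda>x. fst x \<noteq> \<infinity>) M)"
    and poles: "size (filter_mset (\<lambda>x. fst x = \<infinity>) N) = size (filter_mset (\<lambda>x. fst x = \<infinity>) M)"
    and degrees: "\<And>i. size (filter_mset (touches i) N) = size (filter_mset (touches i) M)"
  shows "D - M + N \<in> arc_diagrams alpha beta gamma"
proof -
  have "\<forall>x\<in>#D - M + N. 1 \<le> snd x \<and> enat (snd x) < fst x"
    using valid arc_diagrams_member[OF D] by (auto dest: in_diffD)
  then show ?thesis
    using D size_filter_mset_replace[OF sub arcs] size_filter_mset_replace[OF sub poles]
      size_filter_mset_replace[OF sub degrees]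
    unfolding arc_diagrams_def by simp
qed

lemma arc_diagrams_arc_move_closed:
  assumes D: "D \<in> arc_diagrams alpha beta gamma" and move: "arc_move D D'"
  shows "D' \<in> arc_diagrams alpha beta gamma"
  using move unfolding arc_move_def
proof (elim disjE exE conjE)
  fix a b c d :: nat
  assume o: "a > b" "b > c" "c > d" and sub: "{#(enat a, c), (enat b, d)#} \<subseteq># D"
  have pos: "1 \<le> d" using arc_diagrams_member[OF D, of "(enat b, d)"] sub by (auto dest: mset_subset_eqD)
  have "D - {#(enat a, c), (enat b, d)#} + {#(enat a, d), (enat b, c)#} \<in> arc_diagrams alpha beta gamma"
    and "D - {#(enat a, c), (enat b, d)#} + {#(enat a, b), (enat c, d)#} \<in> arc_diagrams alpha beta gamma"
    by (rule arc_diagrams_replace[OF D sub]; use o pos in auto)+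
  then show "D' = D - {#(enat a, c), (enat b, d)#} + {#(enat a, d), (enat b, c)#} \<Longrightarrow> ?thesis"
    and "D' = D - {#(enat a, c), (enat b, d)#} + {#(enat a, b), (enat c, d)#} \<Longrightarrow> ?thesis"
    by simp_all
next
  fix a b c :: nat
  assume o: "a > b" "b > c" and sub: "{#(enat a, c), (\<infinity>, b)#} \<subseteq># D"
  have pos: "1 \<le> c" using arc_diagrams_member[OF D, of "(enat a, c)"] sub by (auto dest: mset_subset_eqD)
  have "D - {#(enat a, c), (\<infinity>, b)#} + {#(enat a, b), (\<infinity>, c)#} \<in> arc_diagrams alpha beta gamma"
    and "D - {#(enat a, c), (\<infinity>, b)#} + {#(enat b, c), (\<infinity>, a)#} \<in> arc_diagrams alpha beta gamma"
    by (rule arc_diagrams_replace[OF D sub]; use o pos in auto)+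
  then show "D' = D - {#(enat a, c), (\<infinity>, b)#} + {#(enat a, b), (\<infinity>, c)#} \<Longrightarrow> ?thesis"
    and "D' = D - {#(enat a, c), (\<infinity>, b)#} + {#(enat b, c), (\<infinity>, a)#} \<Longrightarrow> ?thesis"
    by simp_all
qed

lemma arc_move_crossing_number:
  assumes strip: "\<forall>i\<ge>1. conj_part beta i \<le> conj_part gamma i + 1"
    and D: "D \<in> arc_diagrams alpha beta gamma" and move: "arc_move D D'"
  shows "crossing_number D' < crossing_number D \<and>
    (crossing_number D' + 2 \<le> crossing_number D \<longrightarrow> arc_move_splits D D')"
proof -
  have replace: ?thesis
    if "D = R + M" "D' = R + N" "crossing_total M = 2" "crossing_total N = 0"
      "\<And>e g. g < e \<Longrightarrow> e \<notin> endpoints M \<Longrightarrow> g \<notin> endpoints M \<Longrightarrow> replacement_respects (enat e, g) M N"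
      "\<And>g. g \<notin> endpoints M \<Longrightarrow> replacement_respects (\<infinity>, g) M N"
    for R M N
  proof -
    note split = that
    have "endpoints_distinct (R + M)" using arc_diagrams_endpoints_distinct[OF strip D] split(1) by simp
    moreover have "\<forall>x\<in>#R. enat (snd x) < fst x" using arc_diagrams_member[OF D] split(1) by simp
    ultimately have "replacement_respects f M N" if "f \<in># R" for f
      using replacement_respects_rest split(5,6) that by blast
    then show ?thesis using crossing_number_replace[of M N R] split by auto
  qed
  from move[unfolded arc_move_def] show ?thesis
  proof (elim disjE exE conjE)
    fix a b c d :: nat
    assume o: "a > b" "b > c" "c > d" and sub: "{#(enat a, c), (enat b, d)#} \<subseteq># D"
    define R where "R = D - {#(enat a, c), (enat b, d)#}"
    have DR: "D = R + {#(enat a, c), (enat b, d)#}"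
      unfolding R_def by (rule subset_mset.diff_add[OF sub, symmetric])
    show "D' = D - {#(enat a, c), (enat b, d)#} + {#(enat a, d), (enat b, c)#} \<Longrightarrow> ?thesis"
      by (rule replace[OF DR, where N="{#(enat a, d), (enat b, c)#}"])
        (use o in \<open>auto simp: R_def crossing_total_pair intro!: move_A_respects_arc move_A_respects_pole\<close>)
    show "D' = D - {#(enat a, c), (enat b, d)#} + {#(enat a, b), (enat c, d)#} \<Longrightarrow> ?thesis"
      by (rule replace[OF DR, where N="{#(enat a, b), (enat c, d)#}"])
        (use o in \<open>auto simp: R_def crossing_total_pair intro!: move_C_respects_arc move_C_respects_pole\<close>)
  next
    fix a b c :: nat
    assume o: "a > b" "b > c" and sub: "{#(enat a, c), (\<infinity>, b)#} \<subseteq># D"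
    define R where "R = D - {#(enat a, c), (\<infinity>, b)#}"
    have DR: "D = R + {#(enat a, c), (\<infinity>, b)#}"
      unfolding R_def by (rule subset_mset.diff_add[OF sub, symmetric])
    show "D' = D - {#(enat a, c), (\<infinity>, b)#} + {#(enat a, b), (\<infinity>, c)#} \<Longrightarrow> ?thesis"
      by (rule replace[OF DR, where N="{#(enat a, b), (\<infinity>, c)#}"])
        (use o in \<open>auto simp: R_def crossing_total_pair intro!: move_B_respects_arc move_B_respects_pole\<close>)
    show "D' = D - {#(enat a, c), (\<infinity>, b)#} + {#(enat b, c), (\<infinity>, a)#} \<Longrightarrow> ?thesis"
      by (rule replace[OF DR, where N="{#(enat b, c), (\<infinity>, a)#}"])
        (use o in \<open>auto simp: R_def crossing_total_pair intro!: move_D_respects_arc move_D_respects_pole\<close>)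
  qed
qed

lemma arc_diagrams_endpoint_le:
  assumes D: "D \<in> arc_diagrams alpha beta gamma" and x: "x \<in># D" "touches i x" and i: "1 \<le> i"
  shows "i \<le> sum_list beta"
proof -
  have "x \<in># filter_mset (touches i) D" using x by simp
  then have "filter_mset (touches i) D \<noteq> {#}" by force
  then have "0 < size (filter_mset (touches i) D)" using nonempty_has_size by blast
  moreover have "int (size (filter_mset (touches i) D)) = int (conj_part beta i) - int (conj_part gamma i)"
    using D i unfolding arc_diagrams_def by auto
  ultimately have "filter (\<lambda>y. i \<le> y) beta \<noteq> []" unfolding conj_part_def by auto
  then obtain y where "y \<in> set beta" "i \<le> y" by (metis filter_empty_conv)
  then show ?thesis using member_le_sum_list[of y beta] by linarith
qed

lemma finite_arc_diagrams: "finite (arc_diagrams alpha beta gamma)"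
proof -
  define A where "A = insert \<infinity> (enat ` {..sum_list beta}) \<times> {..sum_list beta}"
  have "arc_diagrams alpha beta gamma \<subseteq> multisets_of_size A (conj_part alpha 1)"
  proof
    fix D assume D: "D \<in> arc_diagrams alpha beta gamma"
    have "set_mset D \<subseteq> A"
    proof
      fix x assume x: "x \<in># D"
      obtain e g where xe: "x = (e, g)" by (cases x)
      have v: "1 \<le> g" "enat g < e" using arc_diagrams_member[OF D x] xe by auto
      have "g \<le> sum_list beta" using arc_diagrams_endpoint_le[OF D x, of g] v xe by simp
      moreover have "e \<in> insert \<infinity> (enat ` {..sum_list beta})"
      proof (cases e)
        case (enat e')
        then have "e' \<le> sum_list beta" using arc_diagrams_endpoint_le[OF D x, of e'] v xe by simp
        then show ?thesis using enat by auto
      qed simp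
      ultimately show "x \<in> A" using xe unfolding A_def by auto
    qed
    moreover have "size D = conj_part alpha 1"
    proof -
      have "D = filter_mset (\<lambda>x. fst x \<noteq> \<infinity>) D + filter_mset (\<lambda>x. fst x = \<infinity>) D"
        by (rule multiset_eqI) simp
      then have "size D = size (filter_mset (\<lambda>x. fst x \<noteq> \<infinity>) D) + size (filter_mset (\<lambda>x. fst x = \<infinity>) D)"
        by (rule trans[OF arg_cong[where f = size] size_union])
      moreover have "size (filter_mset (\<lambda>x. fst x \<noteq> \<infinity>) D) = conj_part alpha 2"
        "int (size (filter_mset (\<lambda>x. fst x = \<infinity>) D)) = int (conj_part alpha 1) - int (conj_part alpha 2)"
        using D unfolding arc_diagrams_def by auto
      ultimately show ?thesis by linarith
    qed
    ultimately show "D \<in> multisets_of_size A (conj_part alpha 1)" unfolding multisets_of_size_def by auto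
  qed
  moreover have "finite A" unfolding A_def by auto
  ultimately show ?thesis using finite_subset finite_multisets_of_size by metis
qed

lemma uncrossed_arcs_arc_move_into:
  assumes D: "D \<in> arc_diagrams alpha beta gamma" and sub: "{#(enat m, n), (enat k, r)#} \<subseteq># D"
    and order: "k < m" "n < m" "r < k" and distinct: "n \<noteq> k" "n \<noteq> r" "m \<noteq> r"
    and pos: "1 \<le> n" "1 \<le> r"
    and uncrossed: "\<not> crosses (enat m, n) (enat k, r)"
  shows "\<exists>D'\<in>arc_diagrams alpha beta gamma. arc_move D' D"
proof (cases "k < n")
  case True
  let ?D' = "D - {#(enat m, n), (enat k, r)#} + {#(enat m, k), (enat n, r)#}"
  have "?D' \<in> arc_diagrams alpha beta gamma"
    by (rule arc_diagrams_replace[OF D sub]) (use True assms in auto)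
  moreover have "arc_move ?D' D"
    by (rule arc_move_C[OF _ _ _ refl subset_mset.diff_add[OF sub, symmetric]]) (use True order distinct in simp_all)
  ultimately show ?thesis by blast
next
  case False
  then have "n < k" "n < r" using uncrossed order distinct by auto
  let ?D' = "D - {#(enat m, n), (enat k, r)#} + {#(enat m, r), (enat k, n)#}"
  have "?D' \<in> arc_diagrams alpha beta gamma"
    by (rule arc_diagrams_replace[OF D sub]) (use \<open>n < k\<close> \<open>n < r\<close> assms in auto)
  moreover have "arc_move ?D' D"
    by (rule arc_move_A[OF _ _ _ refl subset_mset.diff_add[OF sub, symmetric]])
      (use \<open>n < k\<close> \<open>n < r\<close> order distinct in simp_all)
  ultimately show ?thesis by blast
qed

lemma uncrossed_arc_pole_arc_move_into:
  assumes D: "D \<in> arc_diagrams alpha beta gamma" and sub: "{#(enat m, n), (\<infinity>, r)#} \<subseteq># D"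
    and order: "n < m" and distinct: "r \<noteq> m" "r \<noteq> n" and pos: "1 \<le> n" "1 \<le> r"
    and uncrossed: "\<not> crosses (enat m, n) (\<infinity>, r)"
  shows "\<exists>D'\<in>arc_diagrams alpha beta gamma. arc_move D' D"
proof (cases "r < n")
  case True
  let ?D' = "D - {#(enat m, n), (\<infinity>, r)#} + {#(enat m, r), (\<infinity>, n)#}"
  have "?D' \<in> arc_diagrams alpha beta gamma"
    by (rule arc_diagrams_replace[OF D sub]) (use True assms in auto)
  moreover have "arc_move ?D' D"
    by (rule arc_move_B[OF _ _ refl subset_mset.diff_add[OF sub, symmetric]]) (use True order in simp_all)
  ultimately show ?thesis by blast
next
  case False
  then have "m < r" using uncrossed order distinct by auto
  let ?D' = "D - {#(enat m, n), (\<infinity>, r)#} + {#(enat r, n), (\<infinity>, m)#}"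
  have "?D' \<in> arc_diagrams alpha beta gamma"
    by (rule arc_diagrams_replace[OF D sub]) (use \<open>m < r\<close> assms in auto)
  moreover have "arc_move ?D' D"
    by (rule arc_move_D[OF _ _ refl subset_mset.diff_add[OF sub, symmetric]]) (use \<open>m < r\<close> order in simp_all)
  ultimately show ?thesis by blast
qed

lemma maximal_arc_diagram_crosses:
  assumes strip: "\<forall>i\<ge>1. conj_part beta i \<le> conj_part gamma i + 1"
    and D: "D \<in> arc_diagrams alpha beta gamma" and maximal: "\<forall>D'\<in>arc_diagrams alpha beta gamma. \<not> arc_move D' D"
    and sub: "{#u, v#} \<subseteq># D" and arc: "fst u \<noteq> \<infinity>"
  shows "crosses u v"
proof (rule ccontr)
  assume uncrossed: "\<not> crosses u v"
  have apart: "\<not> (touches i u \<and> touches i v)" for i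
    using endpoints_distinct_pair[OF arc_diagrams_endpoints_distinct[OF strip D] sub] by blast
  have uv: "u \<in># D" "v \<in># D" using sub by (auto dest: mset_subset_eqD)
  obtain m n where u: "u = (enat m, n)" using arc by (cases u) auto
  obtain ev r where v: "v = (ev, r)" by (cases v)
  have un: "1 \<le> n" "n < m" using arc_diagrams_member[OF D uv(1)] u by auto
  have vr: "1 \<le> r" "enat r < ev" using arc_diagrams_member[OF D uv(2)] v by auto
  have "r \<noteq> m" "r \<noteq> n" using apart[of m] apart[of n] u v by auto
  have "\<exists>D'\<in>arc_diagrams alpha beta gamma. arc_move D' D"
  proof (cases ev)
    case (enat k)
    have "k \<noteq> m" "k \<noteq> n" using apart[of m] apart[of n] u v enat by auto
    show ?thesis
    proof (cases "k < m")
      case True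
      show ?thesis
        by (rule uncrossed_arcs_arc_move_into[OF D, where m=m and n=n and k=k and r=r])
          (use sub u v enat True un vr uncrossed \<open>k \<noteq> n\<close> \<open>r \<noteq> m\<close> \<open>r \<noteq> n\<close> in auto)
    next
      case False
      have "{#(enat k, r), (enat m, n)#} \<subseteq># D" using sub u v enat by (simp add: add_mset_commute)
      then show ?thesis
        by (rule uncrossed_arcs_arc_move_into[OF D])
          (use False u v enat un vr uncrossed crosses_commute \<open>k \<noteq> m\<close> \<open>k \<noteq> n\<close> \<open>r \<noteq> m\<close> \<open>r \<noteq> n\<close> in auto)
    qed
  next
    case infinity
    show ?thesis
      by (rule uncrossed_arc_pole_arc_move_into[OF D, where m=m and n=n and r=r])
        (use sub u v infinity un vr uncrossed \<open>r \<noteq> m\<close> \<open>r \<noteq> n\<close> in auto)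
  qed
  then show False using maximal by blast
qed

lemma maximal_arc_diagram_crossing_number:
  assumes strip: "\<forall>i\<ge>1. conj_part beta i \<le> conj_part gamma i + 1"
    and D: "D \<in> arc_diagrams alpha beta gamma" and maximal: "\<forall>D'\<in>arc_diagrams alpha beta gamma. \<not> arc_move D' D"
  shows "crossing_number D = (conj_part alpha 2 choose 2) + conj_part alpha 2 * (conj_part alpha 1 - conj_part alpha 2)"
proof -
  have "size (filter_mset (\<lambda>x. fst x \<noteq> \<infinity>) D) = conj_part alpha 2"
    and "int (size (filter_mset (\<lambda>x. fst x = \<infinity>) D)) = int (conj_part alpha 1) - int (conj_part alpha 2)"
    using D unfolding arc_diagrams_def by auto
  then have "size (filter_mset (\<lambda>x. fst x \<noteq> \<infinity>) D) = conj_part alpha 2"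
    and "size (filter_mset (\<lambda>x. fst x = \<infinity>) D) = conj_part alpha 1 - conj_part alpha 2"
    by linarith+
  moreover have "crossing_number D = (size (filter_mset (\<lambda>x. fst x \<noteq> \<infinity>) D) choose 2)
      + size (filter_mset (\<lambda>x. fst x \<noteq> \<infinity>) D) * size (filter_mset (\<lambda>x. fst x = \<infinity>) D)"
    by (rule crossing_number_all_arcs_cross[OF arc_diagrams_endpoints_distinct[OF strip D]])
      (rule maximal_arc_diagram_crosses[OF strip D maximal])
  ultimately show ?thesis by simp
qed

lemma graded_moves_arc_diagrams:
  assumes strip: "\<forall>i\<ge>1. conj_part beta i \<le> conj_part gamma i + 1"
  shows "graded_moves (arc_diagrams alpha beta gamma) arc_move crossing_number
    ((conj_part alpha 2 choose 2) + conj_part alpha 2 * (conj_part alpha 1 - conj_part alpha 2))"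
proof
  fix x y
  assume x: "x \<in> arc_diagrams alpha beta gamma"
  show "arc_move x y \<Longrightarrow> y \<in> arc_diagrams alpha beta gamma"
    by (rule arc_diagrams_arc_move_closed[OF x])
  show "arc_move x y \<Longrightarrow> crossing_number y < crossing_number x"
    using arc_move_crossing_number[OF strip x] by blast
  show "arc_move x y \<Longrightarrow> crossing_number y + 2 \<le> crossing_number x \<Longrightarrow> \<exists>z. arc_move x z \<and> arc_move\<^sup>+\<^sup>+ z y"
    using arc_move_crossing_number[OF strip x] unfolding arc_move_splits_def by blast
  show "\<forall>u\<in>arc_diagrams alpha beta gamma. \<not> arc_move u x \<Longrightarrow>
      crossing_number x = (conj_part alpha 2 choose 2) + conj_part alpha 2 * (conj_part alpha 1 - conj_part alpha 2)"
    by (rule maximal_arc_diagram_crossing_number[OF strip x])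
  show "\<forall>u. \<not> arc_move x u \<Longrightarrow> crossing_number x = 0"
    using crossing_total_pos_arc_move[of x] unfolding crossing_number_def by (metis div_0 neq0_conv)
qed (rule finite_arc_diagrams)

theorem mainTheorem1:
  fixes alpha beta gamma :: "nat list"
  assumes "is_partition alpha" and "is_partition beta" and "is_partition gamma"
    and "\<forall>x\<in>set alpha. x \<le> 2"
    and "\<forall>i\<ge>1. conj_part beta i \<le> conj_part gamma i + 1"
    and "saturated_chain_in (arc_diagrams alpha beta gamma) C1"
    and "saturated_chain_in (arc_diagrams alpha beta gamma) C2"
  shows "finite C1 \<and> finite C2 \<and> card C1 = card C2"
proof -
  interpret graded_moves "arc_diagrams alpha beta gamma" arc_move crossing_number
    "(conj_part alpha 2 choose 2) + conj_part alpha 2 * (conj_part alpha 1 - conj_part alpha 2)"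
    using graded_moves_arc_diagrams[OF assms(5)] .
  have "saturated_chain_in (arc_diagrams alpha beta gamma) C \<longleftrightarrow> saturated C" for C
    unfolding saturated_chain_in_def is_chain_in_def saturated_def chain_def arc_le_def by blast
  then show ?thesis using saturated_card assms(6,7) by simp
qed

end
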